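(* Let $\mathcal{Y}$ be a finite nonempty set, $p,q$ probability distributions on $\mathcal{Y}$ with full support and $q$ not constant. Let $\Delta\ge0$ be such that there exists $\alpha\ge 0$ with $D_{\mathrm{KL}}(T(q,p,\alpha)\|p)=\Delta$; denote this (unique) $\alpha$ by $\alpha(\Delta)$ and let $\phi_\Delta=T(q,p,\alpha(\Delta))$. Let $\epsilon\in\mathbb{R}$ and let $\psi$ be a probability distribution on $\mathcal{Y}$ such that $$D_{\mathrm{KL}}(\psi\|p)\le\Delta\quad\text{and}\quad H(\psi\|q)\le H(\phi_\Delta\|q)+\epsilon.$$ Then $D_{\mathrm{KL}}(\psi\,\|\,\phi_\Delta)\le \alpha(\Delta)\,\epsilon$.
   Context: For distributions $a,b$ on a finite set, $H(a\|b)=\sum_y a(y)\log\frac{1}{b(y)}$ (cross entropy) and $D_{\mathrm{KL}}(a\|b)=\sum_y a(y)\log\frac{a(y)}{b(y)}$ (natural logarithms). The mismatched tilt is, for $\alpha\in\mathbb{R}$, $T(q,p,\alpha)(y)=\frac{p(y)q(y)^{\alpha}}{\sum_{z}p(z)q(z)^\alpha}$. (The distribution $\phi_\Delta$ is the optimal solution of minimizing $H(\phi\|q)$ subject to $D_{\mathrm{KL}}(\phi\|p)\le\Delta$.) *)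

theory Defs
  imports "HOL-Analysis.Analysis"
begin

definition is_distr :: "('a::finite \<Rightarrow> real) \<Rightarrow> bool" where
  "is_distr a \<longleftrightarrow> (\<forall>y. 0 \<le> a y) \<and> (\<Sum>y\<in>UNIV. a y) = 1"

definition cross_entropy :: "('a::finite \<Rightarrow> real) \<Rightarrow> ('a \<Rightarrow> real) \<Rightarrow> real" where
  "cross_entropy a b = (\<Sum>y\<in>UNIV. a y * ln (1 / b y))"

definition KL :: "('a::finite \<Rightarrow> real) \<Rightarrow> ('a \<Rightarrow> real) \<Rightarrow> real" where
  "KL a b = (\<Sum>y\<in>UNIV. if a y = 0 then 0 else a y * ln (a y / b y))"

definition tilt :: "('a::finite \<Rightarrow> real) \<Rightarrow> ('a \<Rightarrow> real) \<Rightarrow> real \<Rightarrow> 'a \<Rightarrow> real" where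
  "tilt q p \<alpha> y = p y * q y powr \<alpha> / (\<Sum>z\<in>UNIV. p z * q z powr \<alpha>)"

end

theory Submission
  imports Defs
begin

text \<open>For every distribution a, the divergence from the tilt splits as
  KL(a||T) = KL(a||p) + alpha H(a||q) + ln Z, where Z is the normaliser of the tilt.
  Applying this to psi and to phi = T, and subtracting (KL(phi||phi) = 0), gives
  KL(psi||phi) = [KL(psi||p) - KL(phi||p)] + alpha [H(psi||q) - H(phi||q)],
  where the first bracket is at most 0 and the second at most epsilon.\<close>

lemma tilt_normaliser_pos:
  fixes p q :: "'a::finite \<Rightarrow> real"
  assumes "\<forall>y. p y > 0" and "\<forall>y. q y > 0"
  shows "0 < (\<Sum>z\<in>UNIV. p z * q z powr \<alpha>)"
proof (intro sum_pos)
  fix z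
  from assms have "p z > 0" and "q z > 0" by simp_all
  then show "0 < p z * q z powr \<alpha>" by simp
qed simp_all

lemma is_distr_tilt:
  fixes p q :: "'a::finite \<Rightarrow> real"
  assumes p_pos: "\<forall>y. p y > 0" and q_pos: "\<forall>y. q y > 0"
  shows "is_distr (tilt q p \<alpha>)"
proof -
  define Z where "Z = (\<Sum>z\<in>UNIV. p z * q z powr \<alpha>)"
  have Z_pos: "Z > 0"
    unfolding Z_def using tilt_normaliser_pos[OF p_pos q_pos] .
  have "(\<Sum>y\<in>UNIV. tilt q p \<alpha> y) = Z / Z"
    unfolding tilt_def Z_def by (rule sum_divide_distrib[symmetric])
  moreover have "0 \<le> tilt q p \<alpha> y" for y
    unfolding tilt_def using p_pos q_pos Z_pos Z_def by (simp add: less_imp_le)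
  ultimately show ?thesis
    unfolding is_distr_def using Z_pos by simp
qed

lemma KL_self: "KL a a = 0"
  unfolding KL_def by (rule sum.neutral) simp

lemma KL_tilt_eq:
  fixes p q a :: "'a::finite \<Rightarrow> real"
  assumes p_pos: "\<forall>y. p y > 0" and q_pos: "\<forall>y. q y > 0"
    and a_distr: "is_distr a"
  shows "KL a (tilt q p \<alpha>)
    = KL a p + \<alpha> * cross_entropy a q + ln (\<Sum>z\<in>UNIV. p z * q z powr \<alpha>)"
proof -
  define Z where "Z = (\<Sum>z\<in>UNIV. p z * q z powr \<alpha>)"
  have Z_pos: "Z > 0"
    unfolding Z_def using tilt_normaliser_pos[OF p_pos q_pos] .
  have summand_eq:
    "(if a y = 0 then 0 else a y * ln (a y / tilt q p \<alpha> y))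
      = (if a y = 0 then 0 else a y * ln (a y / p y)) + \<alpha> * (a y * ln (1 / q y)) + a y * ln Z"
    for y
  proof (cases "a y = 0")
    case False
    with a_distr have "a y > 0"
      unfolding is_distr_def by (metis less_eq_real_def)
    moreover have "p y > 0" and "q y > 0"
      using p_pos q_pos by simp_all
    ultimately have "ln (a y / tilt q p \<alpha> y) = ln (a y / p y) + \<alpha> * ln (1 / q y) + ln Z"
      using Z_pos unfolding tilt_def Z_def[symmetric] by (simp add: ln_div ln_mult ln_powr)
    with False show ?thesis by (simp add: distrib_left)
  qed simp
  have "KL a (tilt q p \<alpha>) = KL a p + \<alpha> * cross_entropy a q + (\<Sum>y\<in>UNIV. a y) * ln Z"
    unfolding KL_def cross_entropy_def summand_eq
    by (simp add: sum.distrib sum_distrib_left sum_distrib_right)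
  with a_distr show ?thesis
    unfolding is_distr_def Z_def by simp
qed

theorem mainTheorem2:
  fixes p q \<psi> :: "'a::finite \<Rightarrow> real"
    and \<Delta> \<alpha> \<epsilon> :: real
  assumes p_distr: "is_distr p" and p_pos: "\<forall>y. p y > 0"
    and q_distr: "is_distr q" and q_pos: "\<forall>y. q y > 0"
    and q_nonconst: "\<exists>y z. q y \<noteq> q z"
    and Delta_nonneg: "\<Delta> \<ge> 0"
    and alpha_nonneg: "\<alpha> \<ge> 0"
    and alpha_Delta: "KL (tilt q p \<alpha>) p = \<Delta>"
    and psi_distr: "is_distr \<psi>"
    and psi_KL: "KL \<psi> p \<le> \<Delta>"
    and psi_H: "cross_entropy \<psi> q \<le> cross_entropy (tilt q p \<alpha>) q + \<epsilon>"
  shows "KL \<psi> (tilt q p \<alpha>) \<le> \<alpha> * \<epsilon>"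
proof -
  let ?\<phi> = "tilt q p \<alpha>"
  have "KL \<psi> ?\<phi> = KL \<psi> ?\<phi> - KL ?\<phi> ?\<phi>"
    by (simp add: KL_self)
  also have "\<dots> = (KL \<psi> p - KL ?\<phi> p) + \<alpha> * (cross_entropy \<psi> q - cross_entropy ?\<phi> q)"
    using KL_tilt_eq[OF p_pos q_pos psi_distr]
      KL_tilt_eq[OF p_pos q_pos is_distr_tilt[OF p_pos q_pos]]
    by (simp add: algebra_simps)
  also have "\<dots> \<le> 0 + \<alpha> * \<epsilon>"
    using psi_KL alpha_Delta psi_H alpha_nonneg
    by (intro add_mono mult_left_mono) simp_all
  finally show ?thesis by simp
qed

end
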